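(* In the simplicial setting, an $\mathcal I$-space $X$ is flat if and only if (a) each morphism $\mathbf m\to\mathbf n$ of $\mathcal I$ induces a cofibration (injection) $X(\mathbf m)\to X(\mathbf n)$, and (b) for all $l,m,n\ge0$, in the commutative square with corners $X(\mathbf m)$, $X(\mathbf m\sqcup\mathbf n)$, $X(\mathbf l\sqcup\mathbf m)$, $X(\mathbf l\sqcup\mathbf m\sqcup\mathbf n)$ and maps induced by the evident order-preserving inclusions, the intersection of the images of $X(\mathbf l\sqcup\mathbf m)$ and $X(\mathbf m\sqcup\mathbf n)$ in $X(\mathbf l\sqcup\mathbf m\sqcup\mathbf n)$ equals the image of $X(\mathbf m)$.
   Context: $\mathcal I$ is the category with objects the finite sets $\mathbf n=\{1,\dots,n\}$, $n\ge0$, and morphisms the injective maps; $\mathbf m\sqcup\mathbf n$ denotes ordered concatenation. An $\mathcal I$-space is a functor from $\mathcal I$ to simplicial sets. For an object $\mathbf n$, let $\partial(\mathcal I\downarrow\mathbf n)$ be the full subcategory of the comma category $(\mathcal I\downarrow\mathbf n)$ on the objects $\mathbf m\to\mathbf n$ that are not isomorphisms; the latching space is $L_{\mathbf n}(X)=\operatorname{colim}_{\partial(\mathcal I\downarrow\mathbf n)}X$ (via the forgetful functor to $\mathcal I$). A map $X\to Y$ is a flat cofibration if $X(\mathbf n)\cup_{L_{\mathbf n}(X)}L_{\mathbf n}(Y)\to Y(\mathbf n)$ is a cofibration for all $\mathbf n$. An $\mathcal I$-space $X$ is flat if $\emptyset\to X$ is a flat cofibration, i.e. $L_{\mathbf n}(X)\to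 X(\mathbf n)$ is a cofibration for all $\mathbf n$. *)

theory Defs
  imports Main "HOL-Library.FuncSet"
begin

text \<open>The category I: objects are naturals n (standing for the set {0..<n}),
 morphisms m -> n are injective extensional maps {..<m} -> {..<n}.\<close>

definition Inj :: "nat \<Rightarrow> nat \<Rightarrow> (nat \<Rightarrow> nat) set" where
  "Inj m n = {f \<in> {..<m} \<rightarrow>\<^sub>E {..<n}. inj_on f {..<m}}"

text \<open>The simplex category: objects [k] = {0..k}, morphisms monotone extensional maps.\<close>

definition DeltaMor :: "nat \<Rightarrow> nat \<Rightarrow> (nat \<Rightarrow> nat) set" where
  "DeltaMor j k = {f \<in> {..j} \<rightarrow>\<^sub>E {..k}. mono_on {..j} f}"

text \<open>An I-space (functor from I to simplicial sets), with underlying sets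
 X n k (the k-simplices of X(n)); imap m n a k is the map X(m)_k -> X(n)_k
 induced by a : m -> n in I; smap j k t n is the simplicial operator
 X(n)_k -> X(n)_j induced by t : [j] -> [k] in Delta.\<close>

definition I_space ::
  "(nat \<Rightarrow> nat \<Rightarrow> 'a set) \<Rightarrow> (nat \<Rightarrow> nat \<Rightarrow> (nat \<Rightarrow> nat) \<Rightarrow> nat \<Rightarrow> 'a \<Rightarrow> 'a)
   \<Rightarrow> (nat \<Rightarrow> nat \<Rightarrow> (nat \<Rightarrow> nat) \<Rightarrow> nat \<Rightarrow> 'a \<Rightarrow> 'a) \<Rightarrow> bool" where
  "I_space X imap smap \<longleftrightarrow>
     (\<forall>m n a k. a \<in> Inj m n \<longrightarrow> imap m n a k \<in> X m k \<rightarrow> X n k)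
   \<and> (\<forall>n k x. x \<in> X n k \<longrightarrow> imap n n (restrict id {..<n}) k x = x)
   \<and> (\<forall>m n p a b k x. a \<in> Inj m n \<longrightarrow> b \<in> Inj n p \<longrightarrow> x \<in> X m k \<longrightarrow>
        imap m p (compose {..<m} b a) k x = imap n p b k (imap m n a k x))
   \<and> (\<forall>j k t n. t \<in> DeltaMor j k \<longrightarrow> smap j k t n \<in> X n k \<rightarrow> X n j)
   \<and> (\<forall>n k x. x \<in> X n k \<longrightarrow> smap k k (restrict id {..k}) n x = x)
   \<and> (\<forall>i j k s t n x. s \<in> DeltaMor i j \<longrightarrow> t \<in> DeltaMor j k \<longrightarrow> x \<in> X n k \<longrightarrow>
        smap i k (compose {..i} t s) n x = smap i j s n (smap j k t n x))
   \<and> (\<forall>m n a j k t x. a \<in> Inj m n \<longrightarrow> t \<in> DeltaMor j k \<longrightarrow> x \<in> X m k \<longrightarrow>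
        imap m n a j (smap j k t m x) = smap j k t n (imap m n a k x))"

text \<open>Latching space in simplicial degree k, computed as the colimit in Set over
 the category \<partial>(I \<down> n) (objects: non-isomorphisms a : m -> n, i.e. m < n;
 morphisms (m,a) -> (m',a'): b : m -> m' with a' o b = a), by the standard
 construction: disjoint union modulo the equivalence relation generated by
 the morphisms. Colimits of simplicial sets are computed degreewise.\<close>

definition latch_elems :: "(nat \<Rightarrow> nat \<Rightarrow> 'a set) \<Rightarrow> nat \<Rightarrow> nat \<Rightarrow> (nat \<times> (nat \<Rightarrow> nat) \<times> 'a) set" where
  "latch_elems X n k = {(m, a, x). m < n \<and> a \<in> Inj m n \<and> x \<in> X m k}"

definition latch_step ::
  "(nat \<Rightarrow> nat \<Rightarrow> 'a set) \<Rightarrow> (nat \<Rightarrow> nat \<Rightarrow> (nat \<Rightarrow> nat) \<Rightarrow> nat \<Rightarrow> 'a \<Rightarrow> 'a) \<Rightarrow> nat \<Rightarrow> nat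
   \<Rightarrow> ((nat \<times> (nat \<Rightarrow> nat) \<times> 'a) \<times> (nat \<times> (nat \<Rightarrow> nat) \<times> 'a)) set" where
  "latch_step X imap n k = {((m, compose {..<m} a' b, x), (m', a', imap m m' b k x)) | m m' a' b x.
       m' < n \<and> a' \<in> Inj m' n \<and> b \<in> Inj m m' \<and> x \<in> X m k}"

definition latch_rel where
  "latch_rel X imap n k = Id_on (latch_elems X n k) \<union> (latch_step X imap n k \<union> (latch_step X imap n k)\<inverse>)\<^sup>+"

definition latching_space where
  "latching_space X imap n k = latch_elems X n k // latch_rel X imap n k"

definition latching_map where
  "latching_map X imap n k c = the_elem ((\<lambda>(m, a, x). imap m n a k x) ` c)"

text \<open>Cofibrations of simplicial sets are the monomorphisms (degreewise injective).
 X is flat iff L_n(X) -> X(n) is a cofibration for every n.\<close>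

definition flat_I_space where
  "flat_I_space X imap \<longleftrightarrow>
     (\<forall>n k. inj_on (latching_map X imap n k) (latching_space X imap n k))"

end

theory Submission
  imports Defs
begin

(* Everything is degreewise, so fix a simplicial degree k and regard X as a functor from I to
   sets.  Call z in X(N) supported on S if it comes from some X(r) along an injection with image
   in S.  By induction on N, the latching map at N is injective iff all maps into X(N) induced by
   injections are injective and supports in X(N) are closed under intersection.  Indeed, the
   latching relation is generated by elementary moves, and under the inductive hypothesis both
   "being supported on the preimage of S" and "sharing a source with a fixed element" are
   invariant under these moves; conversely, two latching elements with the same image both come
   from their common refinement, so they are related.  Finally, closure of supports under
   intersection is condition (b) after relabelling N so that the two supports become the blocks
   l + m and m + n of l + m + n. *)

lemma InjI:
  "inj_on a {..<m} \<Longrightarrow> a \<in> extensional {..<m} \<Longrightarrow> (\<And>i. i < m \<Longrightarrow> a i < n) \<Longrightarrow> a \<in> Inj m n"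
  by (auto simp: Inj_def PiE_def Pi_def)

lemma InjD:
  assumes "a \<in> Inj m n"
  shows "inj_on a {..<m}" "a \<in> extensional {..<m}" "a ` {..<m} \<subseteq> {..<n}" "\<And>i. i < m \<Longrightarrow> a i < n"
  using assms by (auto simp: Inj_def PiE_def Pi_def)

lemma Inj_compose: "a \<in> Inj m n \<Longrightarrow> b \<in> Inj n p \<Longrightarrow> compose {..<m} b a \<in> Inj m p"
  by (auto simp: Inj_def PiE_def Pi_def compose_def inj_on_def)

lemma Inj_restrict_id: "m \<le> n \<Longrightarrow> restrict id {..<m} \<in> Inj m n"
  by (rule InjI) (auto simp: inj_on_def)

lemma Inj_shift: "l + a \<le> n \<Longrightarrow> (\<lambda>i\<in>{..<a}. l + i) \<in> Inj a n"
  by (rule InjI) (auto simp: inj_on_def)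

lemma image_shift: "(\<lambda>i\<in>{..<a}. l + i) ` {..<a} = {l..<l + (a::nat)}"
  using image_add_atLeastLessThan'[of l 0 a] by (simp add: atLeast0LessThan add.commute)

lemma compose_image: "compose A g f ` A = g ` f ` A"
  by (auto simp: compose_eq)

lemma Inj_imp_le: "a \<in> Inj m n \<Longrightarrow> m \<le> n"
  using card_inj_on_le[of a "{..<m}" "{..<n}"] InjD by auto

lemma Inj_less_if_not_onto:
  assumes "a \<in> Inj m n" "j < n" "j \<notin> a ` {..<m}"
  shows "m < n"
proof -
  have "a ` {..<m} \<subseteq> {..<n} - {j}"
    using InjD(3)[OF assms(1)] assms(3) by auto
  then have "card {..<m} \<le> card ({..<n} - {j})"
    using card_inj_on_le InjD(1)[OF assms(1)] by blast
  then show ?thesis using assms(2) by simp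
qed

lemma Inj_factor:
  assumes c: "c \<in> Inj r N" and e: "e \<in> Inj p N" and sub: "c ` {..<r} \<subseteq> e ` {..<p}"
  obtains d where "d \<in> Inj r p" "compose {..<r} e d = c"
proof
  let ?d = "\<lambda>i\<in>{..<r}. inv_into {..<p} e (c i)"
  have "inj_on (inv_into {..<p} e \<circ> c) {..<r}"
    by (rule comp_inj_on[OF InjD(1)[OF c] inj_on_inv_into[OF sub]])
  moreover have "inv_into {..<p} e (c i) < p" if "i < r" for i
    using sub that by (meson image_subset_iff inv_into_into lessThan_iff)
  ultimately show "?d \<in> Inj r p"
    by (intro InjI) (auto simp: inj_on_def)
  show "compose {..<r} e ?d = c"
    using sub InjD(2)[OF c] by (intro extensionalityI[of _ "{..<r}"]) (auto simp: compose_eq f_inv_into_f)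
qed

lemma Inj_cancel:
  assumes "a \<in> Inj m N" "g \<in> Inj p m" "d \<in> Inj p m" "\<And>i. i < p \<Longrightarrow> a (g i) = a (d i)"
  shows "g = d"
proof (rule extensionalityI[of _ "{..<p}"])
  show "g \<in> extensional {..<p}" "d \<in> extensional {..<p}"
    using InjD(2) assms(2,3) by auto
  show "g i = d i" if "i \<in> {..<p}" for i
    using that assms InjD(4)[OF assms(2)] InjD(4)[OF assms(3)] InjD(1)[OF assms(1)]
    by (auto simp: inj_on_def)
qed

lemma Inj_endo_left_inverse:
  assumes a: "a \<in> Inj n n"
  obtains a' where "a' \<in> Inj n n" "compose {..<n} a' a = restrict id {..<n}"
proof
  have onto: "a ` {..<n} = {..<n}"
    using endo_inj_surj[of "{..<n}" a] InjD[OF a] by auto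
  let ?a' = "restrict (inv_into {..<n} a) {..<n}"
  show "?a' \<in> Inj n n"
    using inj_on_inv_into[of "{..<n}" a "{..<n}"] onto
    by (intro InjI) (auto simp: inj_on_def intro: inv_into_into[of _ _ "{..<n}", simplified])
  show "compose {..<n} ?a' a = restrict id {..<n}"
    using InjD[OF a] by (auto simp: compose_def inv_into_f_f intro!: restrict_ext)
qed

lemma image_if_below: "(\<lambda>i. if i < (l::nat) then f i else g (i - l)) ` {..<l} = f ` {..<l}"
  by auto

lemma bij_betw_minus: "bij_betw (\<lambda>i. i - l) {l..<l + m} {..<m::nat}"
  unfolding bij_betw_def inj_on_def
  by (auto simp: image_iff intro!: bexI[where x = "_ + l"])

lemma image_if_above: "(\<lambda>i. if i < (l::nat) then f i else g (i - l)) ` {l..<l + j} = g ` {..<j}"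
proof -
  have "(\<lambda>i. if i < l then f i else g (i - l)) ` {l..<l + j} = (\<lambda>i. g (i - l)) ` {l..<l + j}"
    by (rule image_cong) auto
  also have "\<dots> = g ` (\<lambda>i. i - l) ` {l..<l + j}"
    by (simp add: image_image)
  also have "(\<lambda>i. i - l) ` {l..<l + j} = {..<j}"
    using bij_betw_minus[of l j] by (simp add: bij_betw_def)
  finally show ?thesis .
qed

lemma bij_betw_if_below:
  assumes f: "bij_betw f {..<l::nat} A" and g: "bij_betw g {..<m} B" and disj: "A \<inter> B = {}"
  shows "bij_betw (\<lambda>i. if i < l then f i else g (i - l)) {..<l + m} (A \<union> B)"
    (is "bij_betw ?h _ _")
proof -
  have "bij_betw ?h {..<l} A"
    using f by (rule bij_betw_cong[THEN iffD1, rotated]) auto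
  moreover have "bij_betw ?h {l..<l + m} B"
    using bij_betw_trans[OF bij_betw_minus[of l m] g] by (rule bij_betw_cong[THEN iffD1, rotated]) auto
  moreover have "{..<l} \<union> {l..<l + m} = {..<l + m}" by auto
  ultimately show ?thesis
    using bij_betw_combine[of ?h "{..<l}" A "{l..<l + m}" B] disj by simp
qed

lemma ex_Inj_overlap:
  assumes "S \<subseteq> {..<N}" "T \<subseteq> {..<N}"
  obtains e l m n where "e \<in> Inj (l + m + n) N"
    "e ` {..<l + m} = S" "e ` {l..<l + m + n} = T" "e ` {l..<l + m} = S \<inter> T"
proof -
  have fin: "finite (S - T)" "finite (S \<inter> T)" "finite (T - S)"
    using assms finite_subset by blast+
  obtain f where f: "bij_betw f {..<card (S - T)} (S - T)"
    using ex_bij_betw_nat_finite[OF fin(1)] atLeast0LessThan by auto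
  obtain g where g: "bij_betw g {..<card (S \<inter> T)} (S \<inter> T)"
    using ex_bij_betw_nat_finite[OF fin(2)] atLeast0LessThan by auto
  obtain h where h: "bij_betw h {..<card (T - S)} (T - S)"
    using ex_bij_betw_nat_finite[OF fin(3)] atLeast0LessThan by auto
  define l m n where "l = card (S - T)" and "m = card (S \<inter> T)" and "n = card (T - S)"
  define gh where "gh = (\<lambda>i. if i < m then g i else h (i - m))"
  define e where "e = (\<lambda>i. if i < l then f i else gh (i - l))"
  have gh_bij: "bij_betw gh {..<m + n} T"
  proof -
    have "S \<inter> T \<inter> (T - S) = {}" "S \<inter> T \<union> (T - S) = T" by auto
    then show ?thesis
      using bij_betw_if_below[OF g h] unfolding gh_def m_def n_def by simp
  qed
  have e_bij: "bij_betw e {..<l + (m + n)} (S \<union> T)"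
  proof -
    have "(S - T) \<inter> T = {}" "S - T \<union> T = S \<union> T" by auto
    then show ?thesis
      using bij_betw_if_below[OF f gh_bij] unfolding e_def l_def by simp
  qed
  have gh_m: "gh ` {..<m} = S \<inter> T"
    using g by (simp add: gh_def image_if_below bij_betw_def m_def)
  have e_S: "e ` {..<l + m} = S"
  proof -
    have "{..<l + m} = {..<l} \<union> {l..<l + m}" by auto
    then have "e ` {..<l + m} = f ` {..<l} \<union> gh ` {..<m}"
      by (simp only: e_def image_Un image_if_below image_if_above)
    also have "\<dots> = S"
      using f gh_m by (auto simp: bij_betw_def l_def)
    finally show ?thesis .
  qed
  have restrict_image: "restrict e {..<l + m + n} ` A = e ` A" if "A \<subseteq> {..<l + m + n}" for A
    using that by (intro image_cong) auto
  show thesis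
  proof
    show "restrict e {..<l + m + n} \<in> Inj (l + m + n) N"
      using e_bij assms by (intro InjI) (auto simp: bij_betw_def add.assoc inj_on_def)
    show "restrict e {..<l + m + n} ` {..<l + m} = S"
      using e_S restrict_image[of "{..<l + m}"] by auto
    show "restrict e {..<l + m + n} ` {l..<l + m + n} = T"
      using gh_bij restrict_image[of "{l..<l + m + n}"] image_if_above[of l f gh "m + n"]
      by (simp add: e_def bij_betw_def add.assoc)
    show "restrict e {..<l + m + n} ` {l..<l + m} = S \<inter> T"
      using gh_m restrict_image[of "{l..<l + m}"] image_if_above[of l f gh m] by (simp add: e_def)
  qed
qed

locale I_functor =
  fixes X :: "nat \<Rightarrow> nat \<Rightarrow> 'a set"
    and imap :: "nat \<Rightarrow> nat \<Rightarrow> (nat \<Rightarrow> nat) \<Rightarrow> nat \<Rightarrow> 'a \<Rightarrow> 'a"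
    and k :: nat
  assumes imap_in: "a \<in> Inj m n \<Longrightarrow> x \<in> X m k \<Longrightarrow> imap m n a k x \<in> X n k"
    and imap_id: "x \<in> X n k \<Longrightarrow> imap n n (restrict id {..<n}) k x = x"
    and imap_compose: "a \<in> Inj m n \<Longrightarrow> b \<in> Inj n p \<Longrightarrow> x \<in> X m k \<Longrightarrow>
        imap m p (compose {..<m} b a) k x = imap n p b k (imap m n a k x)"
begin

definition latch_value :: "nat \<Rightarrow> nat \<times> (nat \<Rightarrow> nat) \<times> 'a \<Rightarrow> 'a" where
  "latch_value N = (\<lambda>(m, a, x). imap m N a k x)"

lemma latch_stepI:
  "m' < N \<Longrightarrow> a' \<in> Inj m' N \<Longrightarrow> b \<in> Inj m m' \<Longrightarrow> x \<in> X m k \<Longrightarrow>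
   ((m, compose {..<m} a' b, x), (m', a', imap m m' b k x)) \<in> latch_step X imap N k"
  unfolding latch_step_def by blast

lemma latch_step_subset: "latch_step X imap N k \<subseteq> latch_elems X N k \<times> latch_elems X N k"
proof
  fix s assume "s \<in> latch_step X imap N k"
  then obtain m m' a' b x where s: "s = ((m, compose {..<m} a' b, x), (m', a', imap m m' b k x))"
    and "m' < N" "a' \<in> Inj m' N" "b \<in> Inj m m'" "x \<in> X m k"
    unfolding latch_step_def by blast
  then show "s \<in> latch_elems X N k \<times> latch_elems X N k"
    using Inj_imp_le[of b m m'] Inj_compose[of b m m' a' N] imap_in[of b m m' x]
    by (auto simp: latch_elems_def)
qed

lemma latch_rel_subset: "latch_rel X imap N k \<subseteq> latch_elems X N k \<times> latch_elems X N k"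
proof -
  have "(latch_step X imap N k \<union> (latch_step X imap N k)\<inverse>)\<^sup>+ \<subseteq> latch_elems X N k \<times> latch_elems X N k"
    using latch_step_subset by (intro trancl_subset_Sigma) auto
  then show ?thesis by (auto simp: latch_rel_def Id_on_def)
qed

lemma equiv_latch_rel: "equiv (latch_elems X N k) (latch_rel X imap N k)"
proof (rule equivI)
  show "refl_on (latch_elems X N k) (latch_rel X imap N k)"
    using latch_rel_subset by (auto simp: refl_on_def latch_rel_def)
  have "sym ((latch_step X imap N k \<union> (latch_step X imap N k)\<inverse>)\<^sup>+)"
    by (rule sym_trancl) (auto simp: sym_def)
  then show "sym (latch_rel X imap N k)"
    by (auto simp: latch_rel_def sym_def)
  show "trans (latch_rel X imap N k)"
    by (auto simp: trans_def latch_rel_def dest: trancl_trans)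
qed (rule latch_rel_subset)

lemma latch_rel_transport:
  assumes "(u, v) \<in> latch_rel X imap N k" "P u"
    and move: "\<And>m m' a' b x. m' < N \<Longrightarrow> a' \<in> Inj m' N \<Longrightarrow> b \<in> Inj m m' \<Longrightarrow> x \<in> X m k \<Longrightarrow>
      P (m, compose {..<m} a' b, x) \<longleftrightarrow> P (m', a', imap m m' b k x)"
  shows "P v"
proof -
  have move_iff: "P w \<longleftrightarrow> P w'" if "(w, w') \<in> latch_step X imap N k" for w w'
    using that move by (auto simp: latch_step_def)
  have "P v" if "(u, v) \<in> (latch_step X imap N k \<union> (latch_step X imap N k)\<inverse>)\<^sup>+"
    using that
  proof (induction rule: trancl_induct)
    case (base w)
    then show ?case using assms(2) move_iff[of u w] move_iff[of w u] by blast
  next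
    case (step w w')
    then show ?case using move_iff[of w w'] move_iff[of w' w] by blast
  qed
  then show ?thesis
    using assms(1,2) by (auto simp: latch_rel_def)
qed

lemma latch_rel_value:
  assumes "(u, v) \<in> latch_rel X imap N k"
  shows "latch_value N u = latch_value N v"
  using assms by (rule latch_rel_transport) (auto simp: latch_value_def imap_compose)

lemma latching_map_class:
  assumes "u \<in> latch_elems X N k"
  shows "latching_map X imap N k (latch_rel X imap N k `` {u}) = latch_value N u"
proof -
  have "(u, u) \<in> latch_rel X imap N k"
    using assms by (auto simp: latch_rel_def)
  moreover have "latch_value N v = latch_value N u" if "v \<in> latch_rel X imap N k `` {u}" for v
    using that latch_rel_value[of u v N] by simp
  ultimately have "latch_value N ` (latch_rel X imap N k `` {u}) = {latch_value N u}"
    by (metis (no_types, lifting) Image_singleton_iff empty_iff image_constant image_cong)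
  then show ?thesis
    unfolding latching_map_def latch_value_def[symmetric] by simp
qed

lemma inj_latching_map_iff:
  "inj_on (latching_map X imap N k) (latching_space X imap N k) \<longleftrightarrow>
   (\<forall>u\<in>latch_elems X N k. \<forall>v\<in>latch_elems X N k.
      latch_value N u = latch_value N v \<longrightarrow> (u, v) \<in> latch_rel X imap N k)"
  (is "?inj \<longleftrightarrow> ?rel")
proof
  assume ?inj
  show ?rel
  proof (intro ballI impI)
    fix u v
    assume u: "u \<in> latch_elems X N k" and v: "v \<in> latch_elems X N k"
      and "latch_value N u = latch_value N v"
    then have "latch_rel X imap N k `` {u} = latch_rel X imap N k `` {v}"
      using inj_onD[OF \<open>?inj\<close>] latching_map_class[OF u] latching_map_class[OF v]
      unfolding latching_space_def by (simp add: quotientI)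
    then show "(u, v) \<in> latch_rel X imap N k"
      using eq_equiv_class_iff[OF equiv_latch_rel u v] by simp
  qed
next
  assume ?rel
  show ?inj
  proof (rule inj_onI)
    fix C D
    assume "C \<in> latching_space X imap N k" "D \<in> latching_space X imap N k"
      and eq: "latching_map X imap N k C = latching_map X imap N k D"
    then obtain u v where u: "u \<in> latch_elems X N k" "C = latch_rel X imap N k `` {u}"
      and v: "v \<in> latch_elems X N k" "D = latch_rel X imap N k `` {v}"
      unfolding latching_space_def by (auto elim!: quotientE)
    then have "(u, v) \<in> latch_rel X imap N k"
      using \<open>?rel\<close> eq latching_map_class by simp
    then show "C = D"
      using u v equiv_class_eq[OF equiv_latch_rel] by simp
  qed
qed


definition supported :: "nat \<Rightarrow> 'a \<Rightarrow> nat set \<Rightarrow> bool" where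
  "supported N z S \<longleftrightarrow>
     (\<exists>r c w. c \<in> Inj r N \<and> c ` {..<r} \<subseteq> S \<and> w \<in> X r k \<and> z = imap r N c k w)"

definition inj_into :: "nat \<Rightarrow> bool" where
  "inj_into N \<longleftrightarrow> (\<forall>m a. a \<in> Inj m N \<longrightarrow> inj_on (imap m N a k) (X m k))"

definition supports_Int :: "nat \<Rightarrow> bool" where
  "supports_Int N \<longleftrightarrow>
     (\<forall>z S T. supported N z S \<longrightarrow> supported N z T \<longrightarrow> supported N z (S \<inter> T))"

lemma supportedI:
  "c \<in> Inj r N \<Longrightarrow> c ` {..<r} \<subseteq> S \<Longrightarrow> w \<in> X r k \<Longrightarrow> z = imap r N c k w \<Longrightarrow> supported N z S"
  unfolding supported_def by blast

lemma supportedE: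
  assumes "supported N z S"
  obtains r c w where "c \<in> Inj r N" "c ` {..<r} \<subseteq> S" "w \<in> X r k" "z = imap r N c k w"
  using assms unfolding supported_def by blast

lemma supported_self: "x \<in> X m k \<Longrightarrow> {..<m} \<subseteq> S \<Longrightarrow> supported m x S"
  using supportedI[OF Inj_restrict_id[OF order_refl], of m S x x] imap_id[of x m] by simp

lemma supported_cong:
  assumes "S \<inter> {..<N} = T \<inter> {..<N}"
  shows "supported N z S \<longleftrightarrow> supported N z T"
proof -
  have "supported N z T" if "supported N z S" "S \<inter> {..<N} = T \<inter> {..<N}" for S T
  proof -
    obtain r c w where c: "c \<in> Inj r N" "c ` {..<r} \<subseteq> S" "w \<in> X r k" "z = imap r N c k w"
      using \<open>supported N z S\<close> by (rule supportedE)
    have "c ` {..<r} \<subseteq> T"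
      using InjD(3)[OF c(1)] c(2) that(2) by blast
    then show ?thesis by (rule supportedI[OF c(1) _ c(3,4)])
  qed
  from this[of S T] this[of T S] assms show ?thesis by blast
qed

lemma supported_mono:
  assumes "supported N z S" "S \<subseteq> T"
  shows "supported N z T"
proof -
  obtain r c w where c: "c \<in> Inj r N" "c ` {..<r} \<subseteq> S" "w \<in> X r k" "z = imap r N c k w"
    using assms(1) by (rule supportedE)
  show ?thesis
    using c(2) assms(2) by (intro supportedI[OF c(1) _ c(3,4)]) (rule subset_trans)
qed

lemma supported_factor:
  assumes "supported N z S" "e \<in> Inj p N" "S \<inter> {..<N} \<subseteq> e ` {..<p}"
  obtains w where "w \<in> X p k" "z = imap p N e k w"
proof -
  obtain r c w where c: "c \<in> Inj r N" "c ` {..<r} \<subseteq> S" "w \<in> X r k" "z = imap r N c k w"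
    using assms(1) by (rule supportedE)
  obtain d where d: "d \<in> Inj r p" "compose {..<r} e d = c"
    using Inj_factor[OF c(1) assms(2)] c(2) InjD(3)[OF c(1)] assms(3) by blast
  show thesis
  proof (rule that)
    show "imap r p d k w \<in> X p k" using imap_in[OF d(1) c(3)] .
    show "z = imap p N e k (imap r p d k w)"
      using imap_compose[OF d(1) assms(2) c(3)] d(2) c(4) by simp
  qed
qed

lemma supported_imap:
  assumes "b \<in> Inj m n" "supported m x (b -` T)"
  shows "supported n (imap m n b k x) T"
proof -
  obtain r c w where c: "c \<in> Inj r m" "c ` {..<r} \<subseteq> b -` T" "w \<in> X r k" "x = imap r m c k w"
    using assms(2) by (rule supportedE)
  show ?thesis
  proof (rule supportedI)
    show "compose {..<r} b c \<in> Inj r n" using Inj_compose[OF c(1) assms(1)] .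
    show "compose {..<r} b c ` {..<r} \<subseteq> T" using c(2) by (auto simp: compose_image)
    show "imap m n b k x = imap r n (compose {..<r} b c) k w"
      using imap_compose[OF c(1) assms(1) c(3)] c(4) by simp
  qed (rule c(3))
qed

lemma inj_on_imap_endo:
  assumes a: "a \<in> Inj n n"
  shows "inj_on (imap n n a k) (X n k)"
proof -
  obtain a' where a': "a' \<in> Inj n n" "compose {..<n} a' a = restrict id {..<n}"
    using Inj_endo_left_inverse[OF a] .
  show ?thesis
  proof (rule inj_on_inverseI)
    show "imap n n a' k (imap n n a k x) = x" if "x \<in> X n k" for x
      using imap_compose[OF a a'(1) that] a'(2) imap_id[OF that] by simp
  qed
qed

lemma imap_pullback:
  assumes "inj_into M" "supports_Int M"
    and b: "b \<in> Inj m M" and d: "d \<in> Inj p M" and x: "x \<in> X m k" and u: "u \<in> X p k"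
    and eq: "imap m M b k x = imap p M d k u"
  obtains e1 q e2 v where "e1 \<in> Inj q m" "e2 \<in> Inj q p" "\<And>i. i < q \<Longrightarrow> b (e1 i) = d (e2 i)"
    "v \<in> X q k" "x = imap q m e1 k v" "u = imap q p e2 k v"
proof -
  have "supported M (imap m M b k x) (b ` {..<m} \<inter> d ` {..<p})"
    using \<open>supports_Int M\<close> supportedI[OF b _ x] supportedI[OF d _ u eq]
    unfolding supports_Int_def by blast
  then obtain q c v where c: "c \<in> Inj q M" "c ` {..<q} \<subseteq> b ` {..<m} \<inter> d ` {..<p}"
    "v \<in> X q k" "imap m M b k x = imap q M c k v"
    by (rule supportedE)
  obtain e1 where e1: "e1 \<in> Inj q m" "compose {..<q} b e1 = c"
    using Inj_factor[OF c(1) b] c(2) by blast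
  obtain e2 where e2: "e2 \<in> Inj q p" "compose {..<q} d e2 = c"
    using Inj_factor[OF c(1) d] c(2) by blast
  have cancel: "y = imap q n e k v"
    if a: "a \<in> Inj n M" and y: "y \<in> X n k" and e: "e \<in> Inj q n" "compose {..<q} a e = c"
      and "imap n M a k y = imap q M c k v" for n a e y
  proof (rule inj_onD[of "imap n M a k" "X n k"])
    show "inj_on (imap n M a k) (X n k)"
      using \<open>inj_into M\<close> a unfolding inj_into_def by blast
    show "imap n M a k y = imap n M a k (imap q n e k v)"
      using that(5) imap_compose[OF e(1) a c(3)] e(2) by simp
  qed (use y imap_in[OF e(1) c(3)] in auto)
  show thesis
  proof (rule that[OF e1(1) e2(1) _ c(3)])
    show "b (e1 i) = d (e2 i)" if "i < q" for i
      using that fun_cong[OF e1(2), of i] fun_cong[OF e2(2), of i] by (simp add: compose_eq)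
    show "x = imap q m e1 k v" using cancel[OF b x e1 c(4)] .
    show "u = imap q p e2 k v" using cancel[OF d u e2] c(4) eq by simp
  qed
qed

lemma supported_imap_iff:
  assumes "inj_into n" "supports_Int n" "b \<in> Inj m n" "x \<in> X m k"
  shows "supported n (imap m n b k x) T \<longleftrightarrow> supported m x (b -` T)"
proof
  assume "supported n (imap m n b k x) T"
  then obtain p d u where d: "d \<in> Inj p n" "d ` {..<p} \<subseteq> T" "u \<in> X p k"
    "imap m n b k x = imap p n d k u"
    by (rule supportedE)
  obtain e1 q e2 v where e: "e1 \<in> Inj q m" "e2 \<in> Inj q p" "\<And>i. i < q \<Longrightarrow> b (e1 i) = d (e2 i)"
    and v: "v \<in> X q k" "x = imap q m e1 k v" "u = imap q p e2 k v"
    using imap_pullback[OF assms(1-3) d(1) assms(4) d(3,4)] by blast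
  have "e1 ` {..<q} \<subseteq> b -` T"
    using d(2) e(3) InjD(4)[OF e(2)] by (auto simp: image_subset_iff)
  then show "supported m x (b -` T)"
    using supportedI[OF e(1) _ v(1,2)] by blast
qed (rule supported_imap[OF assms(3)])


lemma supported_preimage_latch_rel:
  assumes "((r, c, w), (r', c', w')) \<in> latch_rel X imap N k" "supported r w (c -` S)"
    and below: "\<And>m. m < N \<Longrightarrow> inj_into m \<and> supports_Int m"
  shows "supported r' w' (c' -` S)"
proof -
  have "(\<lambda>(m, a, x). supported m x (a -` S)) (r', c', w')"
  proof (rule latch_rel_transport[OF assms(1)])
    show "(\<lambda>(m, a, x). supported m x (a -` S)) (r, c, w)"
      using assms(2) by simp
    fix m m' a' b x
    assume "m' < N" "b \<in> Inj m m'" "x \<in> X m k"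
    then have "supported m' (imap m m' b k x) (a' -` S) \<longleftrightarrow> supported m x (b -` a' -` S)"
      using below by (intro supported_imap_iff) auto
    also have "\<dots> \<longleftrightarrow> supported m x (compose {..<m} a' b -` S)"
      by (rule supported_cong) (auto simp: compose_eq)
    finally show "(\<lambda>(m, a, x). supported m x (a -` S)) (m, compose {..<m} a' b, x) \<longleftrightarrow>
        (\<lambda>(m, a, x). supported m x (a -` S)) (m', a', imap m m' b k x)"
      by simp
  qed
  then show ?thesis
    by simp
qed

lemma supports_Int_if_flat:
  assumes flat: "inj_on (latching_map X imap N k) (latching_space X imap N k)"
    and below: "\<And>m. m < N \<Longrightarrow> inj_into m \<and> supports_Int m"
  shows "supports_Int N"
  unfolding supports_Int_def
proof (intro allI impI)
  fix z S T
  assume zS: "supported N z S" and zT: "supported N z T"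
  obtain r c w where c: "c \<in> Inj r N" "c ` {..<r} \<subseteq> S" "w \<in> X r k" "z = imap r N c k w"
    using zS by (rule supportedE)
  obtain r' c' w' where c': "c' \<in> Inj r' N" "c' ` {..<r'} \<subseteq> T" "w' \<in> X r' k" "z = imap r' N c' k w'"
    using zT by (rule supportedE)
  show "supported N z (S \<inter> T)"
  proof (cases "{..<N} \<subseteq> S \<or> {..<N} \<subseteq> T")
    case True
    then have "S \<inter> T \<inter> {..<N} = T \<inter> {..<N} \<or> S \<inter> T \<inter> {..<N} = S \<inter> {..<N}"
      by blast
    then show ?thesis
      using zS zT supported_cong by blast
  next
    case False
    then obtain j j' where "j < N" "j \<notin> S" "j' < N" "j' \<notin> T"
      by auto
    then have "r < N" "r' < N"
      using Inj_less_if_not_onto c(1,2) c'(1,2) by blast+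
    then have "(r, c, w) \<in> latch_elems X N k" "(r', c', w') \<in> latch_elems X N k"
      using c c' by (auto simp: latch_elems_def)
    moreover have "latch_value N (r, c, w) = latch_value N (r', c', w')"
      using c(4) c'(4) by (simp add: latch_value_def)
    ultimately have "((r, c, w), (r', c', w')) \<in> latch_rel X imap N k"
      using flat unfolding inj_latching_map_iff by blast
    moreover have "supported r w (c -` S)"
      using supported_self[OF c(3)] c(2) by (simp add: image_subset_iff subset_eq)
    ultimately have "supported r' w' (c' -` S)"
      by (rule supported_preimage_latch_rel) (fact below)
    moreover have "c' -` S \<inter> {..<r'} = c' -` (S \<inter> T) \<inter> {..<r'}"
      using c'(2) by auto
    ultimately have "supported r' w' (c' -` (S \<inter> T))"
      using supported_cong by blast
    then show ?thesis
      using supported_imap[OF c'(1)] c'(4) by simp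
  qed
qed

text \<open>The invariant transported along the latching relation to show that \<open>X(a)\<close> is
  injective for an injection \<open>a\<close> that is not a bijection.\<close>

definition shares_source :: "nat \<Rightarrow> (nat \<Rightarrow> nat) \<Rightarrow> 'a \<Rightarrow> nat \<times> (nat \<Rightarrow> nat) \<times> 'a \<Rightarrow> bool" where
  "shares_source m a x = (\<lambda>(m1, a1, x1). \<exists>p g d u. g \<in> Inj p m \<and> d \<in> Inj p m1 \<and>
     (\<forall>i<p. a (g i) = a1 (d i)) \<and> u \<in> X p k \<and> x = imap p m g k u \<and> x1 = imap p m1 d k u)"

lemma shares_sourceI:
  "g \<in> Inj p m \<Longrightarrow> d \<in> Inj p m1 \<Longrightarrow> (\<And>i. i < p \<Longrightarrow> a (g i) = a1 (d i)) \<Longrightarrow> u \<in> X p k \<Longrightarrow>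
   x = imap p m g k u \<Longrightarrow> x1 = imap p m1 d k u \<Longrightarrow> shares_source m a x (m1, a1, x1)"
  unfolding shares_source_def by blast

lemma shares_source_refl:
  assumes "x \<in> X m k"
  shows "shares_source m a x (m, a, x)"
  by (rule shares_sourceI[OF Inj_restrict_id[of m m] Inj_restrict_id[of m m] _ assms])
    (simp_all add: imap_id[OF assms])

lemma shares_source_move_iff:
  assumes "inj_into m'" "supports_Int m'" and b: "b \<in> Inj m1 m'" and x1: "x1 \<in> X m1 k"
  shows "shares_source m a x (m1, compose {..<m1} a' b, x1) \<longleftrightarrow>
    shares_source m a x (m', a', imap m1 m' b k x1)"
proof
  assume "shares_source m a x (m1, compose {..<m1} a' b, x1)"
  then obtain g p d u where g: "g \<in> Inj p m" and d: "d \<in> Inj p m1"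
    and agree: "\<forall>i<p. a (g i) = compose {..<m1} a' b (d i)"
    and u: "u \<in> X p k" "x = imap p m g k u" "x1 = imap p m1 d k u"
    by (auto simp: shares_source_def)
  show "shares_source m a x (m', a', imap m1 m' b k x1)"
  proof (rule shares_sourceI[OF g Inj_compose[OF d b] _ u(1,2)])
    show "a (g i) = a' (compose {..<p} b d i)" if "i < p" for i
      using agree InjD(4)[OF d that] that by (simp add: compose_eq)
    show "imap m1 m' b k x1 = imap p m' (compose {..<p} b d) k u"
      using imap_compose[OF d b u(1)] u(3) by simp
  qed
next
  assume "shares_source m a x (m', a', imap m1 m' b k x1)"
  then obtain g p d u where g: "g \<in> Inj p m" and d: "d \<in> Inj p m'"
    and agree: "\<forall>i<p. a (g i) = a' (d i)"
    and u: "u \<in> X p k" "x = imap p m g k u" "imap m1 m' b k x1 = imap p m' d k u"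
    by (auto simp: shares_source_def)
  obtain e1 q e2 v where e1: "e1 \<in> Inj q m1" and e2: "e2 \<in> Inj q p"
    and square: "\<And>i. i < q \<Longrightarrow> b (e1 i) = d (e2 i)"
    and v: "v \<in> X q k" "x1 = imap q m1 e1 k v" "u = imap q p e2 k v"
    using imap_pullback[OF assms(1,2) b d x1 u(1,3)] by blast
  show "shares_source m a x (m1, compose {..<m1} a' b, x1)"
  proof (rule shares_sourceI[OF Inj_compose[OF e2 g] e1 _ v(1) _ v(2)])
    show "a (compose {..<q} g e2 i) = compose {..<m1} a' b (e1 i)" if "i < q" for i
      using agree InjD(4)[OF e2 that] square[OF that] InjD(4)[OF e1 that] that
      by (simp add: compose_eq)
    show "x = imap q m (compose {..<q} g e2) k v"
      using imap_compose[OF e2 g v(1)] u(2) v(3) by simp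
  qed
qed

lemma inj_into_if_flat:
  assumes flat: "inj_on (latching_map X imap N k) (latching_space X imap N k)"
    and below: "\<And>m. m < N \<Longrightarrow> inj_into m \<and> supports_Int m"
  shows "inj_into N"
  unfolding inj_into_def
proof (intro allI impI)
  fix m a
  assume a: "a \<in> Inj m N"
  show "inj_on (imap m N a k) (X m k)"
  proof (cases "m < N")
    case False
    then show ?thesis
      using inj_on_imap_endo Inj_imp_le[OF a] a by (metis le_antisym not_less)
  next
    case True
    show ?thesis
    proof (rule inj_onI)
      fix x y
      assume x: "x \<in> X m k" and y: "y \<in> X m k" and eq: "imap m N a k x = imap m N a k y"
      have "((m, a, x), (m, a, y)) \<in> latch_rel X imap N k"
        using flat True a x y eq unfolding inj_latching_map_iff
        by (auto simp: latch_elems_def latch_value_def)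
      then have "shares_source m a x (m, a, y)"
      proof (rule latch_rel_transport)
        show "shares_source m a x (m, a, x)" using shares_source_refl[OF x] .
        fix m1 m' a' b x1
        assume "m' < N" "b \<in> Inj m1 m'" "x1 \<in> X m1 k"
        then show "shares_source m a x (m1, compose {..<m1} a' b, x1) \<longleftrightarrow>
            shares_source m a x (m', a', imap m1 m' b k x1)"
          using below shares_source_move_iff by blast
      qed
      then obtain g p d u where g: "g \<in> Inj p m" and d: "d \<in> Inj p m"
        and agree: "\<forall>i<p. a (g i) = a (d i)" and "x = imap p m g k u" "y = imap p m d k u"
        by (auto simp: shares_source_def)
      moreover have "g = d"
        using Inj_cancel[OF a g d] agree by blast
      ultimately show "x = y" by simp
    qed
  qed
qed

lemma flat_if_inj_into_supports_Int:
  assumes "inj_into N" "supports_Int N"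
  shows "inj_on (latching_map X imap N k) (latching_space X imap N k)"
  unfolding inj_latching_map_iff
proof (intro ballI impI)
  fix u v
  assume "u \<in> latch_elems X N k" "v \<in> latch_elems X N k" and eq: "latch_value N u = latch_value N v"
  then obtain m a x m' a' x' where u: "u = (m, a, x)" "m < N" "a \<in> Inj m N" "x \<in> X m k"
    and v: "v = (m', a', x')" "m' < N" "a' \<in> Inj m' N" "x' \<in> X m' k"
    by (auto simp: latch_elems_def)
  have "imap m N a k x = imap m' N a' k x'"
    using eq u(1) v(1) by (simp add: latch_value_def)
  then obtain e1 q e2 w where e1: "e1 \<in> Inj q m" and e2: "e2 \<in> Inj q m'"
    and square: "\<And>i. i < q \<Longrightarrow> a (e1 i) = a' (e2 i)"
    and w: "w \<in> X q k" "x = imap q m e1 k w" "x' = imap q m' e2 k w"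
    using imap_pullback[OF assms u(3) v(3) u(4) v(4)] by blast
  have "compose {..<q} a' e2 = compose {..<q} a e1"
    using square by (auto simp: compose_def intro: restrict_ext)
  then have "((q, compose {..<q} a e1, w), u) \<in> latch_step X imap N k"
    and "((q, compose {..<q} a e1, w), v) \<in> latch_step X imap N k"
    using latch_stepI[OF u(2,3) e1 w(1)] latch_stepI[OF v(2,3) e2 w(1)] u(1) v(1) w(2,3)
    by auto
  then have "(u, v) \<in> (latch_step X imap N k \<union> (latch_step X imap N k)\<inverse>)\<^sup>+"
    by (blast intro: trancl_into_trancl r_into_trancl)
  then show "(u, v) \<in> latch_rel X imap N k"
    by (simp add: latch_rel_def)
qed


definition images_Int_eq :: "nat \<Rightarrow> nat \<Rightarrow> nat \<Rightarrow> bool" where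
  "images_Int_eq l m n \<longleftrightarrow>
     imap (l + m) (l + m + n) (restrict id {..<l + m}) k ` X (l + m) k
     \<inter> imap (m + n) (l + m + n) (\<lambda>i\<in>{..<m + n}. l + i) k ` X (m + n) k
     = imap m (l + m + n) (\<lambda>i\<in>{..<m}. l + i) k ` X m k"

lemma Inj_blocks:
  "restrict id {..<l + m} \<in> Inj (l + m) (l + m + n)"
  "(\<lambda>i\<in>{..<m + n}. l + i) \<in> Inj (m + n) (l + m + n)"
  "(\<lambda>i\<in>{..<m}. l + i) \<in> Inj m (l + m + n)"
  by (auto intro: Inj_restrict_id Inj_shift)

lemma images_Int_supset:
  "imap m (l + m + n) (\<lambda>i\<in>{..<m}. l + i) k ` X m k \<subseteq>
     imap (l + m) (l + m + n) (restrict id {..<l + m}) k ` X (l + m) k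
     \<inter> imap (m + n) (l + m + n) (\<lambda>i\<in>{..<m + n}. l + i) k ` X (m + n) k"
proof
  fix z
  assume "z \<in> imap m (l + m + n) (\<lambda>i\<in>{..<m}. l + i) k ` X m k"
  then obtain u where u: "u \<in> X m k" and z: "z = imap m (l + m + n) (\<lambda>i\<in>{..<m}. l + i) k u"
    by blast
  have shift: "(\<lambda>i\<in>{..<m}. l + i) \<in> Inj m (l + m)"
    and incl: "restrict id {..<m} \<in> Inj m (m + n)"
    by (auto intro: Inj_restrict_id Inj_shift)
  have "compose {..<m} (restrict id {..<l + m}) (\<lambda>i\<in>{..<m}. l + i) = (\<lambda>i\<in>{..<m}. l + i)"
    and "compose {..<m} (\<lambda>i\<in>{..<m + n}. l + i) (restrict id {..<m}) = (\<lambda>i\<in>{..<m}. l + i)"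
    by (auto simp: compose_def intro: restrict_ext)
  then have "z = imap (l + m) (l + m + n) (restrict id {..<l + m}) k (imap m (l + m) (\<lambda>i\<in>{..<m}. l + i) k u)"
    and "z = imap (m + n) (l + m + n) (\<lambda>i\<in>{..<m + n}. l + i) k (imap m (m + n) (restrict id {..<m}) k u)"
    using imap_compose[OF shift Inj_blocks(1)[where n = n] u] imap_compose[OF incl Inj_blocks(2)[where l = l] u] z by simp_all
  then show "z \<in> imap (l + m) (l + m + n) (restrict id {..<l + m}) k ` X (l + m) k
     \<inter> imap (m + n) (l + m + n) (\<lambda>i\<in>{..<m + n}. l + i) k ` X (m + n) k"
    using imap_in[OF shift u] imap_in[OF incl u] by blast
qed

lemma images_Int_eq_if_supports_Int:
  assumes "supports_Int (l + m + n)"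
  shows "images_Int_eq l m n"
  unfolding images_Int_eq_def
proof (rule subset_antisym[OF subsetI images_Int_supset])
  fix z
  assume "z \<in> imap (l + m) (l + m + n) (restrict id {..<l + m}) k ` X (l + m) k
     \<inter> imap (m + n) (l + m + n) (\<lambda>i\<in>{..<m + n}. l + i) k ` X (m + n) k"
  then obtain x y where x: "x \<in> X (l + m) k" "z = imap (l + m) (l + m + n) (restrict id {..<l + m}) k x"
    and y: "y \<in> X (m + n) k" "z = imap (m + n) (l + m + n) (\<lambda>i\<in>{..<m + n}. l + i) k y"
    by blast
  have "supported (l + m + n) z {..<l + m}"
    by (rule supportedI[OF Inj_blocks(1) _ x]) auto
  moreover have "supported (l + m + n) z {l..<l + m + n}"
    by (rule supportedI[OF Inj_blocks(2) _ y]) auto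
  ultimately have "supported (l + m + n) z ({..<l + m} \<inter> {l..<l + m + n})"
    using assms unfolding supports_Int_def by blast
  moreover have "{..<l + m} \<inter> {l..<l + m + n} \<inter> {..<l + m + n} \<subseteq> (\<lambda>i\<in>{..<m}. l + i) ` {..<m}"
    unfolding image_shift by auto
  ultimately obtain w where "w \<in> X m k" "z = imap m (l + m + n) (\<lambda>i\<in>{..<m}. l + i) k w"
    using supported_factor[OF _ Inj_blocks(3)] by blast
  then show "z \<in> imap m (l + m + n) (\<lambda>i\<in>{..<m}. l + i) k ` X m k"
    by blast
qed

lemma supported_middle_block:
  assumes "images_Int_eq l m n"
    and "supported (l + m + n) z {..<l + m}" "supported (l + m + n) z {l..<l + m + n}"
  shows "supported (l + m + n) z {l..<l + m}"
proof -
  obtain x where "x \<in> X (l + m) k" "z = imap (l + m) (l + m + n) (restrict id {..<l + m}) k x"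
    using supported_factor[OF assms(2) Inj_blocks(1)] by auto
  moreover obtain y where "y \<in> X (m + n) k" "z = imap (m + n) (l + m + n) (\<lambda>i\<in>{..<m + n}. l + i) k y"
    using supported_factor[OF assms(3) Inj_blocks(2)] image_shift[of l "m + n"] by (auto simp: add.assoc)
  ultimately obtain u where "u \<in> X m k" "z = imap m (l + m + n) (\<lambda>i\<in>{..<m}. l + i) k u"
    using assms(1) unfolding images_Int_eq_def by blast
  then show ?thesis
    using supportedI[OF Inj_blocks(3)] image_shift[of l m] by auto
qed

lemma supports_Int_if_images_Int_eq:
  assumes inj: "inj_into N" and cond: "\<And>l m n. images_Int_eq l m n"
  shows "supports_Int N"
  unfolding supports_Int_def
proof (intro allI impI)
  fix z S T
  assume zS: "supported N z S" and zT: "supported N z T"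
  obtain e l m n where e: "e \<in> Inj (l + m + n) N"
    and eS: "e ` {..<l + m} = S \<inter> {..<N}" and eT: "e ` {l..<l + m + n} = T \<inter> {..<N}"
    and eST: "e ` {l..<l + m} = S \<inter> {..<N} \<inter> (T \<inter> {..<N})"
    by (rule ex_Inj_overlap[OF Int_lower2 Int_lower2])
  note blocks = Inj_blocks[where l = l and m = m and n = n]
  obtain x where x: "x \<in> X (l + m) k"
    and zx: "z = imap (l + m) N (compose {..<l + m} e (restrict id {..<l + m})) k x"
  proof (rule supported_factor[OF zS Inj_compose[OF blocks(1) e]])
    show "S \<inter> {..<N} \<subseteq> compose {..<l + m} e (restrict id {..<l + m}) ` {..<l + m}"
      using eS by (simp add: compose_image)
  qed
  obtain y where y: "y \<in> X (m + n) k"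
    and zy: "z = imap (m + n) N (compose {..<m + n} e (\<lambda>i\<in>{..<m + n}. l + i)) k y"
  proof (rule supported_factor[OF zT Inj_compose[OF blocks(2) e]])
    show "T \<inter> {..<N} \<subseteq> compose {..<m + n} e (\<lambda>i\<in>{..<m + n}. l + i) ` {..<m + n}"
      using eT image_shift[of l "m + n"] by (simp add: compose_image add.assoc)
  qed
  define z0 where "z0 = imap (l + m) (l + m + n) (restrict id {..<l + m}) k x"
  have z: "z = imap (l + m + n) N e k z0"
    unfolding z0_def using zx imap_compose[OF blocks(1) e x] by (rule trans)
  have "imap (l + m + n) N e k z0
      = imap (l + m + n) N e k (imap (m + n) (l + m + n) (\<lambda>i\<in>{..<m + n}. l + i) k y)"
    using z zy imap_compose[OF blocks(2) e y] by simp
  then have "z0 = imap (m + n) (l + m + n) (\<lambda>i\<in>{..<m + n}. l + i) k y"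
    by (rule inj_onD[OF inj[unfolded inj_into_def, rule_format, OF e] _
          imap_in[OF blocks(1) x, folded z0_def] imap_in[OF blocks(2) y]])
  then have "supported (l + m + n) z0 {l..<l + m + n}"
    by (rule supportedI[OF blocks(2) _ y, rotated]) auto
  moreover have "supported (l + m + n) z0 {..<l + m}"
    by (rule supportedI[OF blocks(1) _ x z0_def]) auto
  ultimately have "supported (l + m + n) z0 {l..<l + m}"
    using supported_middle_block[OF cond] by blast
  then have "supported (l + m + n) z0 (e -` (S \<inter> T))"
    by (rule supported_mono) (use eST in blast)
  then show "supported N z (S \<inter> T)"
    unfolding z by (rule supported_imap[OF e])
qed

lemma flat_iff_inj_into_images_Int_eq:
  "(\<forall>N. inj_on (latching_map X imap N k) (latching_space X imap N k)) \<longleftrightarrow>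
   (\<forall>N. inj_into N) \<and> (\<forall>l m n. images_Int_eq l m n)"
proof
  assume flat: "\<forall>N. inj_on (latching_map X imap N k) (latching_space X imap N k)"
  have "inj_into N \<and> supports_Int N" for N
  proof (induction N rule: less_induct)
    case (less N)
    show ?case
      using inj_into_if_flat[OF flat[rule_format] less] supports_Int_if_flat[OF flat[rule_format] less] ..
  qed
  then show "(\<forall>N. inj_into N) \<and> (\<forall>l m n. images_Int_eq l m n)"
    using images_Int_eq_if_supports_Int by simp
next
  assume "(\<forall>N. inj_into N) \<and> (\<forall>l m n. images_Int_eq l m n)"
  then show "\<forall>N. inj_on (latching_map X imap N k) (latching_space X imap N k)"
    using flat_if_inj_into_supports_Int supports_Int_if_images_Int_eq by simp
qed

end

lemma I_functor_if_I_space: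
  assumes "I_space X imap smap"
  shows "I_functor X imap k"
proof
  note I_space = assms[unfolded I_space_def]
  show "imap m n a k x \<in> X n k" if "a \<in> Inj m n" "x \<in> X m k" for a m n x
    using funcset_mem[OF I_space[THEN conjunct1, rule_format, OF that(1)] that(2)] .
  show "imap n n (restrict id {..<n}) k x = x" if "x \<in> X n k" for n x
    using I_space[THEN conjunct2, THEN conjunct1, rule_format, OF that] .
  show "imap m p (compose {..<m} b a) k x = imap n p b k (imap m n a k x)"
    if "a \<in> Inj m n" "b \<in> Inj n p" "x \<in> X m k" for a m n b p x
    using I_space[THEN conjunct2, THEN conjunct2, THEN conjunct1, rule_format, OF that] .
qed

lemma all_iff_all_conj_commute:
  assumes "\<And>k. (\<forall>N. Q N k) \<longleftrightarrow> (\<forall>N m a. A k N m a) \<and> (\<forall>l m n. B k l m n)"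
  shows "(\<forall>N k. Q N k) \<longleftrightarrow> (\<forall>m N a k. A k N m a) \<and> (\<forall>l m n k. B k l m n)"
proof
  assume "\<forall>N k. Q N k"
  then have "(\<forall>N m a. A k N m a) \<and> (\<forall>l m n. B k l m n)" for k
    using assms by blast
  then show "(\<forall>m N a k. A k N m a) \<and> (\<forall>l m n k. B k l m n)"
    by blast
next
  assume "(\<forall>m N a k. A k N m a) \<and> (\<forall>l m n k. B k l m n)"
  then have "\<forall>N. Q N k" for k
    using assms by blast
  then show "\<forall>N k. Q N k"
    by blast
qed

theorem proposition3p9:
  fixes X :: "nat \<Rightarrow> nat \<Rightarrow> 'a set"
    and imap :: "nat \<Rightarrow> nat \<Rightarrow> (nat \<Rightarrow> nat) \<Rightarrow> nat \<Rightarrow> 'a \<Rightarrow> 'a"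
    and smap :: "nat \<Rightarrow> nat \<Rightarrow> (nat \<Rightarrow> nat) \<Rightarrow> nat \<Rightarrow> 'a \<Rightarrow> 'a"
  assumes "I_space X imap smap"
  shows "flat_I_space X imap \<longleftrightarrow>
     (\<forall>m n a k. a \<in> Inj m n \<longrightarrow> inj_on (imap m n a k) (X m k))
   \<and> (\<forall>l m n k.
        imap (l + m) (l + m + n) (restrict id {..<l + m}) k ` X (l + m) k
        \<inter> imap (m + n) (l + m + n) (\<lambda>i\<in>{..<m + n}. l + i) k ` X (m + n) k
        = imap m (l + m + n) (\<lambda>i\<in>{..<m}. l + i) k ` X m k)"
proof -
  have "(\<forall>N. inj_on (latching_map X imap N k) (latching_space X imap N k)) \<longleftrightarrow>
      (\<forall>N m a. a \<in> Inj m N \<longrightarrow> inj_on (imap m N a k) (X m k))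
    \<and> (\<forall>l m n.
        imap (l + m) (l + m + n) (restrict id {..<l + m}) k ` X (l + m) k
        \<inter> imap (m + n) (l + m + n) (\<lambda>i\<in>{..<m + n}. l + i) k ` X (m + n) k
        = imap m (l + m + n) (\<lambda>i\<in>{..<m}. l + i) k ` X m k)" for k
    using I_functor.flat_iff_inj_into_images_Int_eq[OF I_functor_if_I_space[OF assms]]
    unfolding I_functor.inj_into_def[OF I_functor_if_I_space[OF assms]]
      I_functor.images_Int_eq_def[OF I_functor_if_I_space[OF assms]] .
  from all_iff_all_conj_commute[OF this] show ?thesis
    unfolding flat_I_space_def .
qed

end
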